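(* For $4-2\sqrt3<p\leq1$, the set $\mathcal{S}(p)$ is empty; that is, there is no $3\times3$ matrix $A=(A_{ij})_{i,j\in[3]}$ with nonnegative entries satisfying all of: (1) $A_{11}+A_{22}+p\leq\sum_{i,j}A_{ij}\leq1$; (2) $A_{1j}\geq\frac12\sum_iA_{ij}$ for all $j\in[3]$, and $A_{i1}\geq\frac12\sum_jA_{ij}$ for all $i\in[3]$; (3) $(A_{1j})^2+(A_{2j})^2\geq p\left(\sum_iA_{ij}\right)^2$ for all $j\in[3]$; (4) $(A_{i1})^2+(A_{i2})^2\geq p\left(\sum_jA_{ij}\right)^2$ for all $i\in[3]$.
   Context: $\mathcal{S}(p)$ denotes the collection of $3\times3$ nonnegative matrices satisfying conditions (1)–(4). *)

theory Defs
  imports "HOL-Analysis.Analysis"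
begin

text \<open>3x3 real matrices are real^3^3; A $ i $ j is the entry in row i, column j.
  Index 1 of the paper is (1::3), index 2 is (2::3), index 3 is (3::3) (= 0 in the type 3).\<close>

definition S_set :: "real \<Rightarrow> (real^3^3) set" where
  "S_set p = {A.
     (\<forall>i j. A $ i $ j \<ge> 0) \<and>
     A $ 1 $ 1 + A $ 2 $ 2 + p \<le> (\<Sum>i\<in>UNIV. \<Sum>j\<in>UNIV. A $ i $ j) \<and>
     (\<Sum>i\<in>UNIV. \<Sum>j\<in>UNIV. A $ i $ j) \<le> 1 \<and>
     (\<forall>j. A $ 1 $ j \<ge> (1/2) * (\<Sum>i\<in>UNIV. A $ i $ j)) \<and>
     (\<forall>i. A $ i $ 1 \<ge> (1/2) * (\<Sum>j\<in>UNIV. A $ i $ j)) \<and>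
     (\<forall>j. (A $ 1 $ j)^2 + (A $ 2 $ j)^2 \<ge> p * (\<Sum>i\<in>UNIV. A $ i $ j)^2) \<and>
     (\<forall>i. (A $ i $ 1)^2 + (A $ i $ 2)^2 \<ge> p * (\<Sum>j\<in>UNIV. A $ i $ j)^2)}"

end

theory Submission
  imports Defs
begin

text \<open>
  Write \<open>r = sqrt 3\<close>. Every row and every column \<open>(a, b, c)\<close> of a matrix in \<open>S_set p\<close>
  satisfies \<open>b + c \<le> a\<close> and \<open>a\<^sup>2 + b\<^sup>2 \<ge> p (a + b + c)\<^sup>2\<close>; for \<open>p \<ge> 4 - 2r\<close> this forces
  the linear inequality \<open>3b + (3 + r) c \<le> r a\<close>. Applied to rows 1, 3 and columns 1, 3 these
  inequalities chain together to \<open>3M \<le> 2r A\<^sub>1\<^sub>1\<close>, where \<open>M\<close> is the mass outside the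
  entries \<open>(1,1)\<close> and \<open>(2,2)\<close>. Condition (1), on the other hand, gives \<open>M \<ge> p > 0\<close> and
  \<open>M \<ge> p (A\<^sub>1\<^sub>1 + M)\<close>, which together with the first bound forces
  \<open>p \<le> 2r / (3 + 2r) = 4 - 2r\<close>.
\<close>

lemma sqrt_3_bounds: "3/2 < sqrt (3::real)" "sqrt (3::real) < 2"
proof -
  show "3/2 < sqrt (3::real)" by (rule real_less_rsqrt) (simp add: power2_eq_square)
  show "sqrt (3::real) < 2" using real_sqrt_less_mono[of 3 4] by simp
qed

lemma sqrt_3_mult_cancel: "sqrt 3 * (sqrt 3 * x) = 3 * (x::real)"
  by (simp flip: mult.assoc)

lemma sum_squares_bound_narrow:
  fixes a b :: real
  assumes "0 \<le> b" and "sqrt 3 * b \<le> a"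
  shows "(3 + sqrt 3)\<^sup>2 * (a\<^sup>2 + b\<^sup>2) \<le> (4 - 2 * sqrt 3) * ((3 + 2 * sqrt 3) * a + sqrt 3 * b)\<^sup>2"
proof -
  have "(4 - 2 * sqrt 3) * ((3 + 2 * sqrt 3) * a + sqrt 3 * b)\<^sup>2 - (3 + sqrt 3)\<^sup>2 * (a\<^sup>2 + b\<^sup>2)
      = 12 * b * (a - sqrt 3 * b)"
    by (simp add: algebra_simps power2_eq_square sqrt_3_mult_cancel)
  moreover have "0 \<le> 12 * b * (a - sqrt 3 * b)"
    using assms by simp
  ultimately show ?thesis by linarith
qed

lemma sum_squares_bound_wide:
  fixes a b :: real
  assumes "b \<le> a" and "a < sqrt 3 * b"
  shows "a\<^sup>2 + b\<^sup>2 < (4 - 2 * sqrt 3) * (a + b)\<^sup>2"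
proof -
  have r: "3/2 < sqrt 3" "sqrt 3 < 2" by (fact sqrt_3_bounds)+
  have "0 < (sqrt 3 - 1) * b" using assms by (simp add: algebra_simps)
  then have "0 < b" using r by (simp add: zero_less_mult_iff)
  then have "1 * a < sqrt 3 * a" using assms r by (intro mult_strict_right_mono) auto
  then have "b < sqrt 3 * a" using assms by linarith
  then have "0 < (2 * sqrt 3 - 3) * (sqrt 3 * b - a) * (sqrt 3 * a - b)"
    using assms r by (simp add: mult_pos_pos)
  also have "\<dots> = sqrt 3 * ((4 - 2 * sqrt 3) * (a + b)\<^sup>2 - (a\<^sup>2 + b\<^sup>2))"
    by (simp add: algebra_simps power2_eq_square sqrt_3_mult_cancel)
  finally show ?thesis using r by (simp add: zero_less_mult_iff)
qed

lemma dominated_line_bound: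
  fixes a b c p :: real
  assumes p: "4 - 2 * sqrt 3 \<le> p" and "0 \<le> b" "0 \<le> c" "b + c \<le> a"
    and quad: "p * (a + b + c)\<^sup>2 \<le> a\<^sup>2 + b\<^sup>2"
  shows "3 * b + (3 + sqrt 3) * c \<le> sqrt 3 * a"
proof (rule ccontr)
  assume "\<not> ?thesis"
  then have lt: "(3 + 2 * sqrt 3) * a + sqrt 3 * b < (3 + sqrt 3) * (a + b + c)"
    by (simp add: algebra_simps)
  have r: "3/2 < sqrt 3" "sqrt 3 < 2" by (fact sqrt_3_bounds)+
  have q: "(4 - 2 * sqrt 3) * (a + b + c)\<^sup>2 \<le> a\<^sup>2 + b\<^sup>2"
    using mult_right_mono[OF p zero_le_power2[of "a + b + c"]] quad by linarith
  \<comment> \<open>For \<open>sqrt 3 * b \<le> a\<close> the quadratic constraint fails as soon as \<open>(3 + sqrt 3) (a + b + c)\<close>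
    exceeds \<open>(3 + 2 sqrt 3) a + sqrt 3 b\<close>; for \<open>a < sqrt 3 * b\<close> it fails even at \<open>c = 0\<close>.\<close>
  consider "sqrt 3 * b \<le> a" | "a < sqrt 3 * b" by linarith
  then show False
  proof cases
    case 1
    have "((3 + 2 * sqrt 3) * a + sqrt 3 * b)\<^sup>2 < ((3 + sqrt 3) * (a + b + c))\<^sup>2"
      using lt assms r by (intro power_strict_mono) auto
    then have "(4 - 2 * sqrt 3) * ((3 + 2 * sqrt 3) * a + sqrt 3 * b)\<^sup>2
        < (4 - 2 * sqrt 3) * ((3 + sqrt 3) * (a + b + c))\<^sup>2"
      using r by (intro mult_strict_left_mono) auto
    also have "\<dots> = (3 + sqrt 3)\<^sup>2 * ((4 - 2 * sqrt 3) * (a + b + c)\<^sup>2)"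
      by (simp add: power_mult_distrib)
    also have "\<dots> \<le> (3 + sqrt 3)\<^sup>2 * (a\<^sup>2 + b\<^sup>2)"
      using q by (intro mult_left_mono) auto
    finally show False
      using sum_squares_bound_narrow[OF \<open>0 \<le> b\<close> 1] by linarith
  next
    case 2
    have "a\<^sup>2 + b\<^sup>2 < (4 - 2 * sqrt 3) * (a + b)\<^sup>2"
      using sum_squares_bound_wide[OF _ 2] assms by linarith
    also have "\<dots> \<le> (4 - 2 * sqrt 3) * (a + b + c)\<^sup>2"
      using assms r by (intro mult_left_mono power_mono) auto
    finally show False using q by linarith
  qed
qed

lemma S_set_row_bound:
  assumes "A \<in> S_set p" and "4 - 2 * sqrt 3 \<le> p"
  shows "3 * A$i$2 + (3 + sqrt 3) * A$i$3 \<le> sqrt 3 * A$i$1"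
  using assms(1) unfolding S_set_def sum_3 by (intro dominated_line_bound[OF assms(2)]) auto

lemma S_set_col_bound:
  assumes "A \<in> S_set p" and "4 - 2 * sqrt 3 \<le> p"
  shows "3 * A$2$j + (3 + sqrt 3) * A$3$j \<le> sqrt 3 * A$1$j"
  using assms(1) unfolding S_set_def sum_3 by (intro dominated_line_bound[OF assms(2)]) auto

definition residual_mass :: "real^3^3 \<Rightarrow> real" where
  "residual_mass A = (\<Sum>i\<in>UNIV. \<Sum>j\<in>UNIV. A $ i $ j) - A$1$1 - A$2$2"

lemma S_set_residual_mass_upper:
  assumes "A \<in> S_set p" and "4 - 2 * sqrt 3 \<le> p"
  shows "3 * residual_mass A \<le> 2 * sqrt 3 * A$1$1"
proof -
  have "0 \<le> A$3$3" using assms(1) unfolding S_set_def by blast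
  then have "0 \<le> sqrt 3 * A$3$3" by simp
  with S_set_row_bound[OF assms, of 1] S_set_row_bound[OF assms, of 3]
    S_set_col_bound[OF assms, of 1] S_set_col_bound[OF assms, of 3] \<open>0 \<le> A$3$3\<close>
  show ?thesis unfolding residual_mass_def sum_3 distrib_right mult.assoc by (smt (verit))
qed

lemma S_set_residual_mass_lower:
  assumes "A \<in> S_set p" and "0 \<le> p"
  shows "p \<le> residual_mass A" and "p * (A$1$1 + residual_mass A) \<le> residual_mass A"
proof -
  have "A$1$1 + A$2$2 + p \<le> (\<Sum>i\<in>UNIV. \<Sum>j\<in>UNIV. A $ i $ j)"
    and "(\<Sum>i\<in>UNIV. \<Sum>j\<in>UNIV. A $ i $ j) \<le> 1" and "0 \<le> A$2$2"
    using assms(1) unfolding S_set_def by auto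
  then have "p \<le> residual_mass A" and "A$1$1 + residual_mass A \<le> 1"
    unfolding residual_mass_def by auto
  moreover have "p * (A$1$1 + residual_mass A) \<le> p * 1"
    using \<open>A$1$1 + residual_mass A \<le> 1\<close> assms(2) by (rule mult_left_mono)
  ultimately show "p \<le> residual_mass A" and "p * (A$1$1 + residual_mass A) \<le> residual_mass A"
    by auto
qed

lemma mass_bounds_imp_le_threshold:
  fixes p x M :: real
  assumes "0 < M" and "3 * M \<le> 2 * sqrt 3 * x" and "p * (x + M) \<le> M"
  shows "p \<le> 4 - 2 * sqrt 3"
proof -
  have r: "3/2 < sqrt 3" by (fact sqrt_3_bounds)
  have "0 < sqrt 3 * x" using assms by linarith
  then have "0 < x" using r by (simp add: zero_less_mult_iff)
  have "p < 1"
  proof (rule ccontr)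
    assume "\<not> p < 1"
    then have "x + M \<le> p * (x + M)"
      using \<open>0 < x\<close> assms(1) mult_right_mono[of 1 p "x + M"] by simp
    with assms(3) \<open>0 < x\<close> show False by linarith
  qed
  have "3 * (p * x) \<le> (1 - p) * (3 * M)" using assms(3) by (simp add: algebra_simps)
  also have "\<dots> \<le> (1 - p) * (2 * sqrt 3 * x)" using assms(2) \<open>p < 1\<close> by (intro mult_left_mono) auto
  finally have "(p * (3 + 2 * sqrt 3)) * x \<le> ((4 - 2 * sqrt 3) * (3 + 2 * sqrt 3)) * x"
    by (simp add: algebra_simps sqrt_3_mult_cancel)
  then have "p * (3 + 2 * sqrt 3) \<le> (4 - 2 * sqrt 3) * (3 + 2 * sqrt 3)"
    using \<open>0 < x\<close> by (rule mult_right_le_imp_le)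
  then show ?thesis using r by simp
qed

theorem lemma24:
  fixes p :: real
  assumes "4 - 2 * sqrt 3 < p" and "p \<le> 1"
  shows "S_set p = {}"
proof (rule equals0I)
  fix A assume A: "A \<in> S_set p"
  have "0 < p" using assms(1) sqrt_3_bounds by linarith
  then have "p \<le> 4 - 2 * sqrt 3"
    using S_set_residual_mass_lower[OF A] S_set_residual_mass_upper[OF A] assms(1)
    by (intro mass_bounds_imp_le_threshold) auto
  with assms(1) show False by linarith
qed

end
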